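(* Let $D\ge1$, let $\sigma_1^2,\sigma_2^2>0$, $c'>0$, and for $k=1,\dots,D$ let $\alpha_k>0$, $\beta_k>0$, $q_k>0$ be fixed. Consider the problem in the variables $d_1,\dots,d_D\ge0$ and $0\le\varepsilon\le1$: $$\max\;\tilde f(\varepsilon,\{d_k\})=\frac{1-\varepsilon}{2}\sum_{k=1}^D\log_2\frac{\left(1+\frac{\alpha_k}{\sigma_1^2}q_k\right)\left(1+\frac{\beta_k}{\sigma_2^2}d_k\right)}{1+\frac{\alpha_k}{\sigma_1^2}q_k+\frac{\beta_k}{\sigma_2^2}d_k}\quad\text{s.t.}\quad \tilde g(\varepsilon,\{d_k\})=\varepsilon c'-\frac{1-\varepsilon}{2}\sum_{k=1}^D d_k\ge0.$$ For $\mu_1>0$ define $$d_k(\mu_1)=\frac{\sigma_2^2}{2\beta_k}\left(\sqrt{\left(\frac{q_k\alpha_k}{\sigma_1^2}\right)^2+\frac{4q_k\alpha_k\beta_k\mu_1}{\sigma_1^2\sigma_2^2\ln2}}-\frac{q_k\alpha_k}{\sigma_1^2}-2\right)^+$$ and $$\tilde l(\mu_1)=-\frac12\sum_{k=1}^D\log_2\frac{\left(1+\frac{\alpha_k}{\sigma_1^2}q_k\right)\left(1+\frac{\beta_k}{\sigma_2^2}d_k(\mu_1)\right)}{1+\frac{\alpha_k}{\sigma_1^2}q_k+\frac{\beta_k}{\sigma_2^2}d_k(\mu_1)}+\frac1{\mu_1}\left[c'+\frac12\sum_{k=1}^D d_k(\mu_1)\right].$$ Then there exists $\mu_1^*>0$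 with $\tilde l(\mu_1^* )=0$, and for any such $\mu_1^*$ the point $d_k^*=d_k(\mu_1^* )$, $$\varepsilon^*=\frac{\sum_{k=1}^D d_k^*}{2c'+\sum_{k=1}^D d_k^*},$$ is feasible with $\tilde g(\varepsilon^*,\{d_k^*\})=0$ and, with multiplier $\nu_1=1/\mu_1^*$ on $\tilde g\ge0$ and suitable multipliers $\lambda_k\ge0$ on $d_k\ge0$, satisfies the Karush–Kuhn–Tucker conditions of this problem.
   Context: This is the subproblem, with the source power allocation $q_k$ fixed, of the joint source/relay/TS-ratio design for an energy-harvesting MIMO relay: $\alpha_k,\beta_k$ are squared singular values of the source–relay and relay–destination channels, $d_k$ are transformed relay power variables, $\varepsilon$ is the time-switching ratio, and $c'=\eta(g_1P_0+\sigma_1^2D)>0$ is the harvested-energy constant ($\eta\in(0,1]$ conversion efficiency, $g_1$ largest squared singular value of the energy-phase channel, $P_0$ energy-phase transmit power). *)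

theory Defs
  imports Complex_Main
begin

(* Conventions: s1 = \<sigma>_1^2, s2 = \<sigma>_2^2 (noise variances), cc = c'.
   Indices k = 1..D of the paper are rendered as k = 0..D-1 (k < D);
   vectors are functions nat \<Rightarrow> real, only values at k < D matter.
   log 2 is the base-2 logarithm. *)

definition rate_term :: "real \<Rightarrow> real \<Rightarrow> real \<Rightarrow> real \<Rightarrow> real \<Rightarrow> real \<Rightarrow> real" where
  "rate_term s1 s2 a b qk dk =
     log 2 ((1 + a / s1 * qk) * (1 + b / s2 * dk) / (1 + a / s1 * qk + b / s2 * dk))"

definition ftil :: "nat \<Rightarrow> real \<Rightarrow> real \<Rightarrow> (nat \<Rightarrow> real) \<Rightarrow> (nat \<Rightarrow> real) \<Rightarrow> (nat \<Rightarrow> real)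
                    \<Rightarrow> real \<Rightarrow> (nat \<Rightarrow> real) \<Rightarrow> real" where
  "ftil D s1 s2 \<alpha> \<beta> q \<epsilon> d =
     (1 - \<epsilon>) / 2 * (\<Sum>k<D. rate_term s1 s2 (\<alpha> k) (\<beta> k) (q k) (d k))"

definition gtil :: "nat \<Rightarrow> real \<Rightarrow> real \<Rightarrow> (nat \<Rightarrow> real) \<Rightarrow> real" where
  "gtil D cc \<epsilon> d = \<epsilon> * cc - (1 - \<epsilon>) / 2 * (\<Sum>k<D. d k)"

definition dmu :: "real \<Rightarrow> real \<Rightarrow> (nat \<Rightarrow> real) \<Rightarrow> (nat \<Rightarrow> real) \<Rightarrow> (nat \<Rightarrow> real)
                   \<Rightarrow> real \<Rightarrow> nat \<Rightarrow> real" where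
  "dmu s1 s2 \<alpha> \<beta> q \<mu> k =
     s2 / (2 * \<beta> k) *
       max 0 (sqrt ((q k * \<alpha> k / s1)\<^sup>2 + 4 * q k * \<alpha> k * \<beta> k * \<mu> / (s1 * s2 * ln 2))
              - q k * \<alpha> k / s1 - 2)"

definition ltil :: "nat \<Rightarrow> real \<Rightarrow> real \<Rightarrow> real \<Rightarrow> (nat \<Rightarrow> real) \<Rightarrow> (nat \<Rightarrow> real) \<Rightarrow> (nat \<Rightarrow> real)
                    \<Rightarrow> real \<Rightarrow> real" where
  "ltil D s1 s2 cc \<alpha> \<beta> q \<mu> =
     - 1/2 * (\<Sum>k<D. rate_term s1 s2 (\<alpha> k) (\<beta> k) (q k) (dmu s1 s2 \<alpha> \<beta> q \<mu> k))
     + 1 / \<mu> * (cc + 1/2 * (\<Sum>k<D. dmu s1 s2 \<alpha> \<beta> q \<mu> k))"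

definition feasible :: "nat \<Rightarrow> real \<Rightarrow> real \<Rightarrow> (nat \<Rightarrow> real) \<Rightarrow> bool" where
  "feasible D cc \<epsilon> d \<longleftrightarrow> (\<forall>k<D. 0 \<le> d k) \<and> 0 \<le> \<epsilon> \<and> \<epsilon> \<le> 1 \<and> 0 \<le> gtil D cc \<epsilon> d"

(* KKT conditions for: maximize ftil subject to gtil \<ge> 0 (multiplier \<nu>),
   d_k \<ge> 0 (multipliers \<lambda>_k), \<epsilon> \<ge> 0 (multiplier \<tau>0), 1 - \<epsilon> \<ge> 0 (multiplier \<tau>1). *)
definition KKT_point :: "nat \<Rightarrow> real \<Rightarrow> real \<Rightarrow> real \<Rightarrow> (nat \<Rightarrow> real) \<Rightarrow> (nat \<Rightarrow> real) \<Rightarrow> (nat \<Rightarrow> real)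
                         \<Rightarrow> real \<Rightarrow> (nat \<Rightarrow> real) \<Rightarrow> real \<Rightarrow> (nat \<Rightarrow> real) \<Rightarrow> bool" where
  "KKT_point D s1 s2 cc \<alpha> \<beta> q \<epsilon> d \<nu> lam \<longleftrightarrow>
     feasible D cc \<epsilon> d \<and>
     0 \<le> \<nu> \<and> \<nu> * gtil D cc \<epsilon> d = 0 \<and>
     (\<forall>k<D. 0 \<le> lam k \<and> lam k * d k = 0) \<and>
     (\<exists>\<tau>0 \<tau>1. 0 \<le> \<tau>0 \<and> 0 \<le> \<tau>1 \<and> \<tau>0 * \<epsilon> = 0 \<and> \<tau>1 * (1 - \<epsilon>) = 0 \<and>
        (\<exists>Fe Ge. ((\<lambda>x. ftil D s1 s2 \<alpha> \<beta> q x d) has_real_derivative Fe) (at \<epsilon>) \<and>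
                 ((\<lambda>x. gtil D cc x d) has_real_derivative Ge) (at \<epsilon>) \<and>
                 Fe + \<nu> * Ge + \<tau>0 - \<tau>1 = 0)) \<and>
     (\<forall>k<D. \<exists>Fk Gk.
        ((\<lambda>x. ftil D s1 s2 \<alpha> \<beta> q \<epsilon> (d(k := x))) has_real_derivative Fk) (at (d k)) \<and>
        ((\<lambda>x. gtil D cc \<epsilon> (d(k := x))) has_real_derivative Gk) (at (d k)) \<and>
        Fk + \<nu> * Gk + lam k = 0)"

end

theory Submission
  imports Defs "HOL-Real_Asymp.Real_Asymp"
begin

text \<open>
  With \<open>A = \<alpha> q / \<sigma>\<^sub>1\<^sup>2\<close> and \<open>B = \<beta> / \<sigma>\<^sub>2\<^sup>2\<close>, the power \<open>d\<^sub>k(\<mu>)\<close> is a water-filling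
  level: the marginal rate of channel \<open>k\<close> equals \<open>1/\<mu>\<close> where \<open>d\<^sub>k(\<mu>) > 0\<close> and is at most
  \<open>1/\<mu>\<close> where \<open>d\<^sub>k(\<mu>) = 0\<close>. Hence \<open>\<lambda>\<^sub>k = (1-\<epsilon>)/2 \<cdot> (1/\<mu> - marginal rate)\<close> are
  nonnegative multipliers complementary to \<open>d\<^sub>k\<close>, the stationarity condition in \<open>\<epsilon>\<close> with
  \<open>\<nu> = 1/\<mu>\<close> is literally \<open>l(\<mu>) = 0\<close>, and \<open>\<epsilon>\<^sup>*\<close> is chosen to make the energy constraint tight.
  A root of \<open>l\<close> exists by the intermediate value theorem: for small \<open>\<mu>\<close> all levels vanish
  and \<open>l(\<mu>) = c'/\<mu> > 0\<close>, while the levels grow only like \<open>\<surd>\<mu>\<close>, so \<open>l(\<mu>)\<close> tends to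
  \<open>-\<Sum> log\<^sub>2 (1 + A\<^sub>k) / 2 < 0\<close>.
\<close>

definition relay_rate :: "real \<Rightarrow> real \<Rightarrow> real \<Rightarrow> real" where
  "relay_rate A B x = log 2 ((1 + A) * (1 + B * x) / (1 + A + B * x))"

text \<open>The nonnegative root of \<open>(1 + B x)(1 + A + B x) = A B \<mu> / ln 2\<close>, clipped at \<open>0\<close>.\<close>

definition water_level :: "real \<Rightarrow> real \<Rightarrow> real \<Rightarrow> real" where
  "water_level A B \<mu> = 1 / (2 * B) * max 0 (sqrt (A\<^sup>2 + 4 * A * B * \<mu> / ln 2) - A - 2)"

definition marginal_rate :: "real \<Rightarrow> real \<Rightarrow> real \<Rightarrow> real" where
  "marginal_rate A B x = A * B / (ln 2 * ((1 + B * x) * (1 + A + B * x)))"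

lemma rate_term_eq_relay_rate:
  "rate_term s1 s2 a b qk = relay_rate (a / s1 * qk) (b / s2)"
  unfolding rate_term_def relay_rate_def by simp

lemma dmu_eq_water_level:
  assumes "s1 \<noteq> 0" "s2 \<noteq> 0" "\<beta> k \<noteq> 0"
  shows "dmu s1 s2 \<alpha> \<beta> q \<mu> k = water_level (\<alpha> k / s1 * q k) (\<beta> k / s2) \<mu>"
proof -
  have radicand: "(q k * \<alpha> k / s1)\<^sup>2 + 4 * q k * \<alpha> k * \<beta> k * \<mu> / (s1 * s2 * ln 2)
      = (\<alpha> k / s1 * q k)\<^sup>2 + 4 * (\<alpha> k / s1 * q k) * (\<beta> k / s2) * \<mu> / ln 2"
    using assms by (simp add: field_simps)
  have "q k * \<alpha> k / s1 = \<alpha> k / s1 * q k" "s2 / (2 * \<beta> k) = 1 / (2 * (\<beta> k / s2))"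
    by simp_all
  then show ?thesis
    unfolding dmu_def water_level_def radicand by (simp only:)
qed

lemma dmu_nonneg: "0 \<le> s2 \<Longrightarrow> 0 < \<beta> k \<Longrightarrow> 0 \<le> dmu s1 s2 \<alpha> \<beta> q \<mu> k"
  unfolding dmu_def by (intro mult_nonneg_nonneg) auto

lemma relay_rate_0 [simp]: "A \<noteq> -1 \<Longrightarrow> relay_rate A B 0 = 0"
  unfolding relay_rate_def by simp

lemma has_real_derivative_relay_rate:
  assumes "A \<ge> 0" "B > 0" "x \<ge> 0"
  shows "(relay_rate A B has_real_derivative marginal_rate A B x) (at x)"
proof -
  have pos: "1 + B * x > 0" "1 + A + B * x > 0"
    using assms by (simp_all add: add_pos_nonneg)
  have "((\<lambda>x. (1 + A) * (1 + B * x) / (1 + A + B * x)) has_real_derivative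
      (1 + A) * A * B / (1 + A + B * x)\<^sup>2) (at x)"
    using pos by (auto intro!: derivative_eq_intros simp: field_simps power2_eq_square)
  from DERIV_chain2[OF DERIV_log this] pos assms
  have "(relay_rate A B has_real_derivative
      inverse (ln 2 * ((1 + A) * (1 + B * x) / (1 + A + B * x))) * ((1 + A) * A * B / (1 + A + B * x)\<^sup>2)) (at x)"
    unfolding relay_rate_def by simp
  moreover have "inverse (L * (c * u / w)) * (c * A * B / w\<^sup>2) = A * B / (L * (u * w))"
    if "u > 0" "w > 0" "L > 0" "c > 0" for u w L c :: real
    using that by (simp add: field_simps power2_eq_square)
  ultimately show ?thesis
    unfolding marginal_rate_def using pos assms by simp
qed

lemma water_level_nonneg: "B \<ge> 0 \<Longrightarrow> 0 \<le> water_level A B \<mu>"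
  unfolding water_level_def by simp

lemma water_level_threshold:
  fixes A B \<mu> :: real
  assumes "A \<ge> 0" "B > 0" "\<mu> \<ge> 0"
  defines "w \<equiv> water_level A B \<mu>"
  shows "0 < w \<Longrightarrow> (1 + B * w) * (1 + A + B * w) = A * B * \<mu> / ln 2"
    and "w = 0 \<longleftrightarrow> A * B * \<mu> / ln 2 \<le> 1 + A"
proof -
  define S where "S = sqrt (A\<^sup>2 + 4 * A * B * \<mu> / ln 2)"
  have "0 \<le> 4 * A * B * \<mu> / ln 2"
    using assms by simp
  then have "S\<^sup>2 = A\<^sup>2 + 4 * A * B * \<mu> / ln 2" and S_nonneg: "0 \<le> S"
    unfolding S_def by simp_all
  then have S_sq: "S\<^sup>2 = A\<^sup>2 + 4 * (A * B * \<mu> / ln 2)"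
    by simp
  have w_S: "w = 1 / (2 * B) * max 0 (S - A - 2)"
    unfolding w_def water_level_def S_def ..
  have "(1 + B * w) * (1 + A + B * w) = A * B * \<mu> / ln 2" if "S > A + 2"
  proof -
    have "S = 2 * B * w + A + 2"
      using that assms(2) unfolding w_S by simp
    then have "(1 + B * w) * (1 + A + B * w) = (S\<^sup>2 - A\<^sup>2) / 4"
      by (simp add: power2_eq_square algebra_simps)
    then show ?thesis
      using S_sq by simp
  qed
  moreover have "S \<le> A + 2 \<longleftrightarrow> A * B * \<mu> / ln 2 \<le> 1 + A"
  proof -
    have "S \<le> A + 2 \<longleftrightarrow> S\<^sup>2 \<le> (A + 2)\<^sup>2"
      using S_nonneg assms(1) by (simp add: abs_le_square_iff del: power2_abs)
    also have "\<dots> \<longleftrightarrow> A * B * \<mu> / ln 2 \<le> 1 + A"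
      unfolding S_sq by (auto simp: power2_eq_square algebra_simps simp del: times_divide_eq_right)
    finally show ?thesis .
  qed
  moreover have "w = 0 \<longleftrightarrow> S \<le> A + 2"
    using assms(2) unfolding w_S by (auto simp: max_def)
  ultimately show "0 < w \<Longrightarrow> (1 + B * w) * (1 + A + B * w) = A * B * \<mu> / ln 2"
    and "w = 0 \<longleftrightarrow> A * B * \<mu> / ln 2 \<le> 1 + A"
    by (auto simp: not_le)
qed

lemma marginal_rate_water_level:
  fixes A B \<mu> :: real
  assumes "A > 0" "B > 0" "\<mu> > 0"
  defines "w \<equiv> water_level A B \<mu>"
  shows "marginal_rate A B w \<le> 1 / \<mu>"
    and "0 < w \<Longrightarrow> marginal_rate A B w = 1 / \<mu>"
  unfolding marginal_rate_def
proof -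
  have AB: "A * B > 0"
    using assms by simp
  show "0 < w \<Longrightarrow> A * B / (ln 2 * ((1 + B * w) * (1 + A + B * w))) = 1 / \<mu>"
    using water_level_threshold(1)[of A B \<mu>] assms AB unfolding w_def by (simp add: field_simps)
  show "A * B / (ln 2 * ((1 + B * w) * (1 + A + B * w))) \<le> 1 / \<mu>"
  proof (cases "w = 0")
    case True
    then have "A * B * \<mu> \<le> ln 2 * (1 + A)"
      using water_level_threshold(2)[of A B \<mu>] assms unfolding w_def by (simp add: field_simps)
    then show ?thesis
      using True assms by (simp add: field_simps add_pos_pos)
  next
    case False
    then have "0 < w"
      using water_level_nonneg[of B A \<mu>] assms(2) unfolding w_def by simp
    then show ?thesis
      using water_level_threshold(1)[of A B \<mu>] assms AB unfolding w_def by (simp add: field_simps)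
  qed
qed

lemma filterlim_water_level_at_top:
  assumes "A > 0" "B > 0"
  shows "filterlim (water_level A B) at_top at_top"
  using assms unfolding water_level_def by real_asymp

lemma water_level_over_tendsto_0:
  assumes "A > 0" "B > 0"
  shows "((\<lambda>\<mu>. water_level A B \<mu> / \<mu>) \<longlongrightarrow> 0) at_top"
  using assms unfolding water_level_def by real_asymp

lemma relay_rate_tendsto_at_top:
  assumes "A > 0" "B > 0"
  shows "(relay_rate A B \<longlongrightarrow> log 2 (1 + A)) at_top"
proof -
  have "((\<lambda>x. (1 + A) * (1 + B * x) / (1 + A + B * x)) \<longlongrightarrow> 1 + A) at_top"
    using assms by real_asymp
  then show ?thesis
    unfolding relay_rate_def using assms by (intro tendsto_log) auto
qed

lemma isCont_water_level: "isCont (water_level A B) \<mu>"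
  unfolding water_level_def by (intro continuous_intros) simp

definition relay_dual :: "nat \<Rightarrow> real \<Rightarrow> (nat \<Rightarrow> real) \<Rightarrow> (nat \<Rightarrow> real) \<Rightarrow> real \<Rightarrow> real" where
  "relay_dual D c A B \<mu> =
     - 1/2 * (\<Sum>k<D. relay_rate (A k) (B k) (water_level (A k) (B k) \<mu>))
     + 1 / \<mu> * (c + 1/2 * (\<Sum>k<D. water_level (A k) (B k) \<mu>))"

lemma ltil_eq_relay_dual:
  assumes "s1 \<noteq> 0" "s2 \<noteq> 0" "\<forall>k<D. \<beta> k \<noteq> 0"
  shows "ltil D s1 s2 cc \<alpha> \<beta> q = relay_dual D cc (\<lambda>k. \<alpha> k / s1 * q k) (\<lambda>k. \<beta> k / s2)"
  using assms
  by (auto simp: ltil_def relay_dual_def rate_term_eq_relay_rate dmu_eq_water_level intro!: sum.cong)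

context
  fixes D :: nat and c :: real and A B :: "nat \<Rightarrow> real"
  assumes c_pos: "c > 0" and AB_pos: "\<forall>k<D. A k > 0 \<and> B k > 0"
begin

lemma eventually_relay_dual_pos: "eventually (\<lambda>\<mu>. relay_dual D c A B \<mu> > 0) (at_right 0)"
proof -
  have "eventually (\<lambda>\<mu>. \<mu> \<in> {0<..<ln 2 * (1 + A k) / (A k * B k)}) (at_right 0)" if "k \<in> {..<D}" for k
    using AB_pos that by (intro eventually_at_right_real) (simp add: add_pos_pos)
  then have "eventually (\<lambda>\<mu>. \<forall>k\<in>{..<D}. \<mu> \<in> {0<..<ln 2 * (1 + A k) / (A k * B k)}) (at_right 0)"
    by (intro eventually_ball_finite) auto
  moreover have "eventually (\<lambda>\<mu>. 0 < \<mu>) (at_right (0::real))"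
    by (rule eventually_at_right_less)
  ultimately show ?thesis
  proof eventually_elim
    case (elim \<mu>)
    have "water_level (A k) (B k) \<mu> = 0" if "k < D" for k
    proof -
      have A: "A k > 0" and B: "B k > 0"
        using AB_pos that by auto
      have "\<mu> < ln 2 * (1 + A k) / (A k * B k)"
        using elim that by auto
      then have "A k * B k * \<mu> \<le> ln 2 * (1 + A k)"
        using A B by (simp add: pos_less_divide_eq mult.commute)
      then show ?thesis
        using water_level_threshold(2)[of "A k" "B k" \<mu>] A B elim by (simp add: field_simps)
    qed
    moreover have "(\<Sum>k<D. relay_rate (A k) (B k) 0) = 0"
      using AB_pos by (intro sum.neutral) auto
    ultimately show ?case
      using elim c_pos by (simp add: relay_dual_def)
  qed
qed

lemma relay_dual_tendsto_at_top:
  "(relay_dual D c A B \<longlongrightarrow> - 1/2 * (\<Sum>k<D. log 2 (1 + A k))) at_top"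
proof -
  have rate: "((\<lambda>\<mu>. relay_rate (A k) (B k) (water_level (A k) (B k) \<mu>)) \<longlongrightarrow> log 2 (1 + A k)) at_top"
    if "k < D" for k
    using AB_pos that
    by (intro filterlim_compose[OF relay_rate_tendsto_at_top filterlim_water_level_at_top]) auto
  have level: "((\<lambda>\<mu>. water_level (A k) (B k) \<mu> / \<mu>) \<longlongrightarrow> 0) at_top" if "k < D" for k
    using AB_pos that by (intro water_level_over_tendsto_0) auto
  have "((\<lambda>\<mu>. - 1/2 * (\<Sum>k<D. relay_rate (A k) (B k) (water_level (A k) (B k) \<mu>))
            + (c / \<mu> + 1/2 * (\<Sum>k<D. water_level (A k) (B k) \<mu> / \<mu>)))
         \<longlongrightarrow> - 1/2 * (\<Sum>k<D. log 2 (1 + A k)) + (0 + 1/2 * (\<Sum>k<D. 0))) at_top"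
    by (intro tendsto_intros rate level tendsto_divide_0[OF tendsto_const]
        filterlim_at_top_imp_at_infinity[OF filterlim_ident]) auto
  moreover have "relay_dual D c A B = (\<lambda>\<mu>. - 1/2 * (\<Sum>k<D. relay_rate (A k) (B k) (water_level (A k) (B k) \<mu>))
            + (c / \<mu> + 1/2 * (\<Sum>k<D. water_level (A k) (B k) \<mu> / \<mu>)))"
    by (auto simp: relay_dual_def sum_divide_distrib[symmetric] add_divide_distrib)
  ultimately show ?thesis
    by simp
qed

lemma isCont_relay_dual:
  assumes "\<mu> > 0"
  shows "isCont (relay_dual D c A B) \<mu>"
proof -
  have "isCont (\<lambda>\<mu>. relay_rate (A k) (B k) (water_level (A k) (B k) \<mu>)) \<mu>" if "k < D" for k
    using AB_pos that isCont_water_level water_level_nonneg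
    by (intro isCont_o2[OF _ DERIV_isCont[OF has_real_derivative_relay_rate]]) auto
  then show ?thesis
    unfolding relay_dual_def[abs_def] using assms
    by (intro continuous_intros isCont_water_level) auto
qed

lemma relay_dual_has_root:
  assumes "D > 0"
  shows "\<exists>\<mu>>0. relay_dual D c A B \<mu> = 0"
proof -
  obtain \<mu>0 where \<mu>0: "\<mu>0 > 0" "relay_dual D c A B \<mu>0 > 0"
    using eventually_happens'[OF _ eventually_conj[OF eventually_relay_dual_pos eventually_at_right_less]]
    by auto
  have "(\<Sum>k<D. log 2 (1 + A k)) > 0"
    using assms AB_pos by (intro sum_pos) auto
  then have "eventually (\<lambda>\<mu>. relay_dual D c A B \<mu> < 0) at_top"
    by (intro order_tendstoD(2)[OF relay_dual_tendsto_at_top]) simp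
  then obtain \<mu>1 where \<mu>1: "\<mu>1 \<ge> \<mu>0" "relay_dual D c A B \<mu>1 < 0"
    by (metis eventually_at_top_linorder nle_le)
  have "continuous_on {\<mu>0..\<mu>1} (relay_dual D c A B)"
    using \<mu>0 by (intro continuous_at_imp_continuous_on ballI isCont_relay_dual) auto
  then obtain \<mu> where "\<mu>0 \<le> \<mu>" "relay_dual D c A B \<mu> = 0"
    using IVT2'[of "relay_dual D c A B" \<mu>1 0 \<mu>0] \<mu>0 \<mu>1 by auto
  with \<mu>0 show ?thesis
    by (intro exI[of _ \<mu>]) auto
qed

end

lemma has_real_derivative_sum_fun_upd:
  assumes "finite S" "k \<in> S" "(f k has_real_derivative f') (at (d k))"
  shows "((\<lambda>x. \<Sum>j\<in>S. f j ((d(k := x)) j)) has_real_derivative f') (at (d k))"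
proof -
  have "(\<Sum>j\<in>S. f j ((d(k := x)) j)) = f k x + (\<Sum>j\<in>S - {k}. f j (d j))" for x
    using assms(1,2) by (simp add: sum.remove)
  then show ?thesis
    using assms(3) by (auto intro!: derivative_eq_intros)
qed

lemma has_real_derivative_ftil_time:
  "((\<lambda>x. ftil D s1 s2 \<alpha> \<beta> q x d) has_real_derivative
     - 1/2 * (\<Sum>k<D. rate_term s1 s2 (\<alpha> k) (\<beta> k) (q k) (d k))) (at \<epsilon>)"
  unfolding ftil_def by (auto intro!: derivative_eq_intros)

lemma has_real_derivative_gtil_time:
  "((\<lambda>x. gtil D cc x d) has_real_derivative cc + 1/2 * (\<Sum>k<D. d k)) (at \<epsilon>)"
  unfolding gtil_def by (auto intro!: derivative_eq_intros)

lemma has_real_derivative_ftil_power: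
  assumes "k < D" "0 \<le> \<alpha> k / s1 * q k" "0 < \<beta> k / s2" "0 \<le> d k"
  shows "((\<lambda>x. ftil D s1 s2 \<alpha> \<beta> q \<epsilon> (d(k := x))) has_real_derivative
     (1 - \<epsilon>) / 2 * marginal_rate (\<alpha> k / s1 * q k) (\<beta> k / s2) (d k)) (at (d k))"
  unfolding ftil_def rate_term_eq_relay_rate using assms
  by (intro DERIV_cmult has_real_derivative_sum_fun_upd[where f = "\<lambda>j. relay_rate (\<alpha> j / s1 * q j) (\<beta> j / s2)"]
      has_real_derivative_relay_rate) auto

lemma has_real_derivative_gtil_power:
  assumes "k < D"
  shows "((\<lambda>x. gtil D cc \<epsilon> (d(k := x))) has_real_derivative - ((1 - \<epsilon>) / 2)) (at (d k))"
proof -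
  have "((\<lambda>x. \<Sum>j<D. (d(k := x)) j) has_real_derivative 1) (at (d k))"
    using assms by (intro has_real_derivative_sum_fun_upd[where f = "\<lambda>j y. y"] DERIV_ident) auto
  from DERIV_diff[OF DERIV_const DERIV_cmult[OF this, of "(1 - \<epsilon>) / 2"], of "\<epsilon> * cc"]
  show ?thesis
    unfolding gtil_def by simp
qed

lemma time_switching_tight:
  assumes "cc > 0" "\<forall>k<D. 0 \<le> d k"
  defines "\<epsilon> \<equiv> (\<Sum>k<D. d k) / (2 * cc + (\<Sum>k<D. d k))"
  shows "feasible D cc \<epsilon> d" and "gtil D cc \<epsilon> d = 0"
proof -
  have "0 \<le> (\<Sum>k<D. d k)"
    using assms(2) by (intro sum_nonneg) auto
  then have "0 < 2 * cc + (\<Sum>k<D. d k)"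
    using assms(1) by simp
  then show "gtil D cc \<epsilon> d = 0"
    unfolding gtil_def \<epsilon>_def by (simp add: field_simps)
  then show "feasible D cc \<epsilon> d"
    unfolding feasible_def \<epsilon>_def using assms(1,2) \<open>0 \<le> (\<Sum>k<D. d k)\<close> by auto
qed

lemma KKT_point_water_filling:
  assumes "s1 > 0" "s2 > 0" "cc > 0" "\<forall>k<D. \<alpha> k > 0 \<and> \<beta> k > 0 \<and> q k > 0"
    and "\<mu> > 0" "ltil D s1 s2 cc \<alpha> \<beta> q \<mu> = 0"
  defines "d \<equiv> dmu s1 s2 \<alpha> \<beta> q \<mu>"
  defines "\<epsilon> \<equiv> (\<Sum>k<D. d k) / (2 * cc + (\<Sum>k<D. d k))"
  shows "\<exists>lam. KKT_point D s1 s2 cc \<alpha> \<beta> q \<epsilon> d (1 / \<mu>) lam"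
proof -
  define A where "A k = \<alpha> k / s1 * q k" for k
  define B where "B k = \<beta> k / s2" for k
  have AB: "A k > 0" "B k > 0" if "k < D" for k
    using assms(1,2,4) that unfolding A_def B_def by auto
  have d_eq: "d k = water_level (A k) (B k) \<mu>" if "k < D" for k
    unfolding d_def A_def B_def using assms(1,2,4) that by (intro dmu_eq_water_level) auto
  have d_nonneg: "\<forall>k<D. 0 \<le> d k"
    unfolding d_def using assms(2,4) by (simp add: dmu_nonneg)
  have feasible: "feasible D cc \<epsilon> d" and tight: "gtil D cc \<epsilon> d = 0"
    using time_switching_tight[OF assms(3) d_nonneg] unfolding \<epsilon>_def by simp_all
  then have "\<epsilon> \<le> 1"
    unfolding feasible_def by simp
  define lam where "lam k = (1 - \<epsilon>) / 2 * (1 / \<mu> - marginal_rate (A k) (B k) (d k))" for k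
  have lam: "0 \<le> lam k \<and> lam k * d k = 0" if "k < D" for k
    using marginal_rate_water_level[OF AB[OF that] assms(5)] d_eq[OF that] d_nonneg that \<open>\<epsilon> \<le> 1\<close>
    unfolding lam_def by (cases "d k = 0") (auto simp: less_le)
  txt \<open>Stationarity in \<open>\<epsilon>\<close> holds with \<open>\<tau>\<^sub>0 = \<tau>\<^sub>1 = 0\<close> because it is the equation \<open>l(\<mu>) = 0\<close>.\<close>
  have "- 1/2 * (\<Sum>k<D. rate_term s1 s2 (\<alpha> k) (\<beta> k) (q k) (d k)) + 1 / \<mu> * (cc + 1/2 * (\<Sum>k<D. d k)) = 0"
    using assms(6) unfolding ltil_def d_def .
  then have time: "\<exists>\<tau>0 \<tau>1. 0 \<le> \<tau>0 \<and> 0 \<le> \<tau>1 \<and> \<tau>0 * \<epsilon> = 0 \<and> \<tau>1 * (1 - \<epsilon>) = 0 \<and>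
        (\<exists>Fe Ge. ((\<lambda>x. ftil D s1 s2 \<alpha> \<beta> q x d) has_real_derivative Fe) (at \<epsilon>) \<and>
                 ((\<lambda>x. gtil D cc x d) has_real_derivative Ge) (at \<epsilon>) \<and>
                 Fe + 1 / \<mu> * Ge + \<tau>0 - \<tau>1 = 0)"
    using has_real_derivative_ftil_time has_real_derivative_gtil_time by fastforce
  have power: "\<exists>Fk Gk.
        ((\<lambda>x. ftil D s1 s2 \<alpha> \<beta> q \<epsilon> (d(k := x))) has_real_derivative Fk) (at (d k)) \<and>
        ((\<lambda>x. gtil D cc \<epsilon> (d(k := x))) has_real_derivative Gk) (at (d k)) \<and>
        Fk + 1 / \<mu> * Gk + lam k = 0" if "k < D" for k
    using has_real_derivative_ftil_power[of k D \<alpha> s1 q \<beta> s2 d \<epsilon>]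
      has_real_derivative_gtil_power[OF that, of cc \<epsilon> d] AB[OF that] d_nonneg that
    unfolding A_def B_def lam_def by (fastforce simp: algebra_simps)
  show ?thesis
    unfolding KKT_point_def using feasible tight assms(5) lam time power by auto
qed

theorem mainTheorem2:
  fixes D :: nat and s1 s2 cc :: real and \<alpha> \<beta> q :: "nat \<Rightarrow> real"
  assumes "D \<ge> 1" and "s1 > 0" and "s2 > 0" and "cc > 0"
    and "\<forall>k<D. \<alpha> k > 0 \<and> \<beta> k > 0 \<and> q k > 0"
  shows "(\<exists>\<mu>>0. ltil D s1 s2 cc \<alpha> \<beta> q \<mu> = 0) \<and>
         (\<forall>\<mu>. \<mu> > 0 \<and> ltil D s1 s2 cc \<alpha> \<beta> q \<mu> = 0 \<longrightarrow>
            (let d = dmu s1 s2 \<alpha> \<beta> q \<mu>;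
                 \<epsilon> = (\<Sum>k<D. d k) / (2 * cc + (\<Sum>k<D. d k))
             in feasible D cc \<epsilon> d \<and> gtil D cc \<epsilon> d = 0 \<and>
                (\<exists>lam. KKT_point D s1 s2 cc \<alpha> \<beta> q \<epsilon> d (1 / \<mu>) lam)))"
proof -
  have "ltil D s1 s2 cc \<alpha> \<beta> q = relay_dual D cc (\<lambda>k. \<alpha> k / s1 * q k) (\<lambda>k. \<beta> k / s2)"
    using assms by (intro ltil_eq_relay_dual) auto
  moreover have "\<exists>\<mu>>0. relay_dual D cc (\<lambda>k. \<alpha> k / s1 * q k) (\<lambda>k. \<beta> k / s2) \<mu> = 0"
    using assms by (intro relay_dual_has_root) auto
  ultimately have root: "\<exists>\<mu>>0. ltil D s1 s2 cc \<alpha> \<beta> q \<mu> = 0"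
    by (simp only:)
  have "\<forall>k<D. 0 \<le> dmu s1 s2 \<alpha> \<beta> q \<mu> k" for \<mu>
    using assms(3,5) by (simp add: dmu_nonneg)
  then show ?thesis
    using root time_switching_tight[OF assms(4)] KKT_point_water_filling[OF assms(2-5)]
    unfolding Let_def by blast
qed

end
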